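(* (1) For all $\mathtt{dCBN}$ terms $M,N$: $M^n\{N^n/x\} = (M\{N/x\})^n$. (2) For all $\mathtt{dCBV}$ terms $M,N$: if $N^v = !P$ for some $P$, then $(M\{N/x\})^v = M^v\{P/x\}$.
   Context: $\mathtt{dCBN}$ and $\mathtt{dCBV}$ share the syntax $M,N::=x\mid\lambda x.M\mid MN\mid M[N/x]$ ($M[N/x]$ an explicit substitution binding $x$); $M\{N/x\}$ is capture-avoiding substitution. List contexts $L::=\square\mid L[N/x]$. $\mathtt{dBang}$ terms are $M ::= x\mid\lambda x.M\mid MN\mid M[N/x]\mid\ !M\mid\mathrm{der}\,M$. The translation $(\cdot)^n$ into $\mathtt{dBang}$: $x^n=x$, $(\lambda x.M)^n=\lambda x.M^n$, $(MN)^n=M^n\,!N^n$, $(M[N/x])^n=M^n[!N^n/x]$. The translation $(\cdot)^v$: $x^v=!x$, $(\lambda x.M)^v=!(\lambda x.M^v)$, $(MN)^v=L\langle P\rangle N^v$ if $M^v=L\langle !P\rangle$ for a $\mathtt{dBang}$ list context $L$, and $(MN)^v=\mathrm{der}(M^v)\,N^v$ otherwise; $(M[N/x])^v=M^v[N^v/x]$. *)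

theory Defs
  imports Main
begin

(* Terms are represented with de Bruijn indices (terms up to alpha-equivalence).
   ES M N  represents  M[N/x]  where x is bound in M (index 0 of M). *)
datatype lam = Var nat | Lam lam | App lam lam | ES lam lam

datatype bang = BVar nat | BLam bang | BApp bang bang | BES bang bang | Bang bang | Der bang

primrec lift :: "lam \<Rightarrow> nat \<Rightarrow> lam" where
  "lift (Var i) k = (if i < k then Var i else Var (Suc i))"
| "lift (Lam M) k = Lam (lift M (Suc k))"
| "lift (App M N) k = App (lift M k) (lift N k)"
| "lift (ES M N) k = ES (lift M (Suc k)) (lift N k)"

primrec blift :: "bang \<Rightarrow> nat \<Rightarrow> bang" where
  "blift (BVar i) k = (if i < k then BVar i else BVar (Suc i))"
| "blift (BLam M) k = BLam (blift M (Suc k))"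
| "blift (BApp M N) k = BApp (blift M k) (blift N k)"
| "blift (BES M N) k = BES (blift M (Suc k)) (blift N k)"
| "blift (Bang M) k = Bang (blift M k)"
| "blift (Der M) k = Der (blift M k)"

primrec subst :: "lam \<Rightarrow> nat \<Rightarrow> lam \<Rightarrow> lam" where
  "subst (Var i) k N = (if i < k then Var i else if i = k then N else Var (i - 1))"
| "subst (Lam M) k N = Lam (subst M (Suc k) (lift N 0))"
| "subst (App M M') k N = App (subst M k N) (subst M' k N)"
| "subst (ES M M') k N = ES (subst M (Suc k) (lift N 0)) (subst M' k N)"

primrec bsubst :: "bang \<Rightarrow> nat \<Rightarrow> bang \<Rightarrow> bang" where
  "bsubst (BVar i) k N = (if i < k then BVar i else if i = k then N else BVar (i - 1))"
| "bsubst (BLam M) k N = BLam (bsubst M (Suc k) (blift N 0))"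
| "bsubst (BApp M M') k N = BApp (bsubst M k N) (bsubst M' k N)"
| "bsubst (BES M M') k N = BES (bsubst M (Suc k) (blift N 0)) (bsubst M' k N)"
| "bsubst (Bang M) k N = Bang (bsubst M k N)"
| "bsubst (Der M) k N = Der (bsubst M k N)"

(* dBang list contexts  L ::= [] | L[N/x] *)
datatype lctx = Hole | LES lctx bang

primrec plug :: "lctx \<Rightarrow> bang \<Rightarrow> bang" where
  "plug Hole P = P"
| "plug (LES L N) P = BES (plug L P) N"

primrec tr_n :: "lam \<Rightarrow> bang" where
  "tr_n (Var i) = BVar i"
| "tr_n (Lam M) = BLam (tr_n M)"
| "tr_n (App M N) = BApp (tr_n M) (Bang (tr_n N))"
| "tr_n (ES M N) = BES (tr_n M) (Bang (tr_n N))"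

primrec tr_v :: "lam \<Rightarrow> bang" where
  "tr_v (Var i) = Bang (BVar i)"
| "tr_v (Lam M) = Bang (BLam (tr_v M))"
| "tr_v (App M N) =
     (if \<exists>L P. tr_v M = plug L (Bang P)
      then (case (SOME LP. tr_v M = plug (fst LP) (Bang (snd LP))) of
              (L, P) \<Rightarrow> BApp (plug L P) (tr_v N))
      else BApp (Der (tr_v M)) (tr_v N))"
| "tr_v (ES M N) = BES (tr_v M) (tr_v N)"

end

theory Submission
  imports Defs
begin

text \<open>Both parts are structural inductions on \<open>M\<close>, after showing that the translations commute
with shifting. The only non-compositional clause is the CBV translation of an application, which
asks whether \<open>M\<^sup>v\<close> has the shape \<open>L\<langle>!Q\<rangle>\<close>. Since variables translate to \<open>!x\<close>, the spine of a
translated term never ends in a variable, so neither shifting nor substitution can create or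
destroy this shape, and both commute with removing the bang. The hypothesis \<open>N\<^sup>v = !P\<close> is what
makes the variable case work: \<open>x\<^sup>v{P/x} = !P = N\<^sup>v\<close>.\<close>

lemma tr_n_lift: "tr_n (lift M k) = blift (tr_n M) k"
  by (induction M arbitrary: k) auto

lemma bsubst_tr_n: "bsubst (tr_n M) k (tr_n N) = tr_n (subst M k N)"
  by (induction M arbitrary: k N) (auto simp: tr_n_lift [symmetric])

text \<open>\<open>unbang X = Some (L\<langle>Q\<rangle>)\<close> if \<open>X = L\<langle>!Q\<rangle>\<close>, and \<open>None\<close> if \<open>X\<close> has no such shape.\<close>

fun unbang :: "bang \<Rightarrow> bang option" where
  "unbang (Bang Q) = Some Q"
| "unbang (BES A B) = map_option (\<lambda>A'. BES A' B) (unbang A)"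
| "unbang _ = None"

lemma unbang_plug_Bang: "unbang (plug L (Bang Q)) = Some (plug L Q)"
  by (induction L) auto

lemma unbang_Some_imp_plug_Bang:
  "unbang X = Some Y \<Longrightarrow> \<exists>L Q. X = plug L (Bang Q)"
proof (induction X arbitrary: Y)
  case (BES A B)
  then obtain L Q where "A = plug L (Bang Q)" by auto
  then have "BES A B = plug (LES L B) (Bang Q)" by simp
  then show ?case by blast
next
  case (Bang Q)
  have "Bang Q = plug Hole (Bang Q)" by simp
  then show ?case by blast
qed auto

lemma tr_v_App:
  "tr_v (App M N) =
     (case unbang (tr_v M) of
        Some Q \<Rightarrow> BApp Q (tr_v N)
      | None \<Rightarrow> BApp (Der (tr_v M)) (tr_v N))"
proof (cases "unbang (tr_v M)")
  case None
  then have "\<not> (\<exists>L Q. tr_v M = plug L (Bang Q))"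
    using unbang_plug_Bang by force
  with None show ?thesis by simp
next
  case (Some Y)
  define LQ where "LQ = (SOME LQ. tr_v M = plug (fst LQ) (Bang (snd LQ)))"
  have "\<exists>LQ. tr_v M = plug (fst LQ) (Bang (snd LQ))"
    using unbang_Some_imp_plug_Bang [OF Some] by auto
  then have "tr_v M = plug (fst LQ) (Bang (snd LQ))"
    unfolding LQ_def by (rule someI_ex)
  moreover from this have "Y = plug (fst LQ) (snd LQ)"
    using Some unbang_plug_Bang by simp
  ultimately show ?thesis
    using Some by (auto simp: LQ_def split: prod.splits)
qed

lemma unbang_blift: "unbang (blift X k) = map_option (\<lambda>Y. blift Y k) (unbang X)"
  by (induction X arbitrary: k) (auto simp: option.map_comp comp_def)

lemma tr_v_lift: "tr_v (lift M k) = blift (tr_v M) k"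
  by (induction M arbitrary: k)
    (auto simp: tr_v_App unbang_blift split: option.split simp del: tr_v.simps(3))

lemma unbang_bsubst_tr_v:
  "unbang (bsubst (tr_v M) k P) = map_option (\<lambda>Y. bsubst Y k P) (unbang (tr_v M))"
  by (induction M arbitrary: k P)
    (auto simp: tr_v_App option.map_comp comp_def split: option.split simp del: tr_v.simps(3))

lemma tr_v_subst:
  assumes "tr_v N = Bang P"
  shows "tr_v (subst M k N) = bsubst (tr_v M) k P"
  using assms
proof (induction M arbitrary: k N P)
  case (Lam M)
  then show ?case by (simp add: tr_v_lift)
next
  case (App M1 M2)
  then show ?case
    using unbang_bsubst_tr_v [of M1 k P]
    by (simp add: tr_v_App split: option.split del: tr_v.simps(3))
next
  case (ES M1 M2)
  then show ?case by (simp add: tr_v_lift)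
qed auto

theorem mainTheorem6:
  shows "(\<forall>M N k. bsubst (tr_n M) k (tr_n N) = tr_n (subst M k N)) \<and>
         (\<forall>M N P k. tr_v N = Bang P \<longrightarrow> tr_v (subst M k N) = bsubst (tr_v M) k P)"
  using bsubst_tr_n tr_v_subst by blast

end
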